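(* If a connected graph $G$ has a GS ordering whose $\mathcal{F}$-tree has at most $k$ leaves, then the pathwidth of $G$ is at most $k$. Moreover, this bound is tight: for every $k\ge 1$ there is a graph (e.g. the complete graph $K_{k+1}$) that has a GS ordering whose $\mathcal{F}$-tree has exactly $k$ leaves and whose pathwidth equals $k$.
   Context: All graphs are finite, simple, undirected, connected and non-empty. A GS ordering of $G$ is an ordering $(v_1,\dots,v_n)$ of $V(G)$ such that every $v_i$ with $i>1$ has a neighbor among $v_1,\dots,v_{i-1}$. Its $\mathcal{F}$-tree is the spanning tree rooted at $v_1$ in which the parent of $v_i$ ($i>1$) is its leftmost neighbor in the ordering. A leaf is a non-root vertex without children (the root is never a leaf). *)

theory Defs
  imports Main
begin

definition graph :: "'a set \<Rightarrow> ('a \<Rightarrow> 'a \<Rightarrow> bool) \<Rightarrow> bool" where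
  "graph V E \<longleftrightarrow> finite V \<and> V \<noteq> {} \<and> (\<forall>x y. E x y \<longrightarrow> x \<in> V \<and> y \<in> V)
     \<and> (\<forall>x y. E x y \<longrightarrow> E y x) \<and> (\<forall>x. \<not> E x x)"

definition connected_graph :: "'a set \<Rightarrow> ('a \<Rightarrow> 'a \<Rightarrow> bool) \<Rightarrow> bool" where
  "connected_graph V E \<longleftrightarrow> graph V E \<and> (\<forall>x\<in>V. \<forall>y\<in>V. E\<^sup>*\<^sup>* x y)"

definition gs_ordering :: "'a set \<Rightarrow> ('a \<Rightarrow> 'a \<Rightarrow> bool) \<Rightarrow> 'a list \<Rightarrow> bool" where
  "gs_ordering V E vs \<longleftrightarrow> distinct vs \<and> set vs = V \<and>
     (\<forall>i<length vs. 0 < i \<longrightarrow> (\<exists>j<i. E (vs ! j) (vs ! i)))"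

definition ftree_parent :: "('a \<Rightarrow> 'a \<Rightarrow> bool) \<Rightarrow> 'a list \<Rightarrow> 'a \<Rightarrow> 'a" where
  "ftree_parent E vs v = vs ! (LEAST j. j < length vs \<and> E (vs ! j) v)"

definition ftree_leaves :: "('a \<Rightarrow> 'a \<Rightarrow> bool) \<Rightarrow> 'a list \<Rightarrow> 'a set" where
  "ftree_leaves E vs = {v \<in> set vs. v \<noteq> hd vs \<and>
      \<not> (\<exists>u\<in>set vs. u \<noteq> hd vs \<and> ftree_parent E vs u = v)}"

definition path_decomposition :: "'a set \<Rightarrow> ('a \<Rightarrow> 'a \<Rightarrow> bool) \<Rightarrow> 'a set list \<Rightarrow> bool" where
  "path_decomposition V E Bs \<longleftrightarrow>
     (\<forall>B\<in>set Bs. B \<subseteq> V) \<and> (\<Union>(set Bs)) = V \<and>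
     (\<forall>x y. E x y \<longrightarrow> (\<exists>B\<in>set Bs. x \<in> B \<and> y \<in> B)) \<and>
     (\<forall>v i j l. i \<le> j \<and> j \<le> l \<and> l < length Bs \<and> v \<in> Bs ! i \<and> v \<in> Bs ! l \<longrightarrow> v \<in> Bs ! j)"

definition pathwidth :: "'a set \<Rightarrow> ('a \<Rightarrow> 'a \<Rightarrow> bool) \<Rightarrow> nat" where
  "pathwidth V E = (LEAST w. \<exists>Bs. path_decomposition V E Bs \<and> (\<forall>B\<in>set Bs. card B \<le> w + 1))"

end

theory Submission
  imports Defs
begin

text \<open>Index the GS ordering as v_0, ..., v_(n-1) and let p b < b be the index of the F-tree
  parent of v_b. Take as bag i the vertex v_i together with all v_b whose tree edge spans
  position i, i.e. p b \<le> i < b. Since the parent is the leftmost neighbour, an edge v_a v_b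
  with a < b has p b \<le> a and so lies in bag a, and v_b lies exactly in the bags p b, ..., b.
  The vertices whose tree edges span a common position are pairwise unrelated in the F-tree,
  so choosing a leaf below each of them is injective: every bag has at most k + 1 vertices.
  For tightness, the F-tree of any ordering of K_(k+1) is a star with k leaves, while every
  path decomposition of a clique has a bag containing the whole clique.\<close>

text \<open>A tree on the indices 0, ..., n - 1 rooted at 0, given by parent pointers to smaller
  indices; par 0 is junk.\<close>
locale index_tree =
  fixes n :: nat and par :: "nat \<Rightarrow> nat"
  assumes par_less: "0 < c \<Longrightarrow> c < n \<Longrightarrow> par c < c"
begin

definition child :: "nat \<Rightarrow> nat \<Rightarrow> bool" where
  "child x y \<longleftrightarrow> 0 < y \<and> y < n \<and> par y = x"

definition leaves :: "nat set" where
  "leaves = {l. 0 < l \<and> l < n \<and> \<not> (\<exists>c. child l c)}"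

definition crossing :: "nat \<Rightarrow> nat set" where
  "crossing i = {b. 0 < b \<and> b < n \<and> par b \<le> i \<and> i < b}"

lemma descendant_le: "child\<^sup>*\<^sup>* x y \<Longrightarrow> x \<le> y"
proof (induction rule: rtranclp_induct)
  case (step y z)
  then show ?case using par_less[of z] by (auto simp: child_def)
qed simp

lemma descendant_cases:
  "child\<^sup>*\<^sup>* x y \<Longrightarrow> x = y \<or> (0 < y \<and> y < n \<and> child\<^sup>*\<^sup>* x (par y))"
  by (induction rule: rtranclp_induct) (auto simp: child_def)

lemma common_descendant_comparable:
  "child\<^sup>*\<^sup>* x l \<Longrightarrow> child\<^sup>*\<^sup>* y l \<Longrightarrow> child\<^sup>*\<^sup>* x y \<or> child\<^sup>*\<^sup>* y x"
proof (induction l rule: less_induct)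
  case (less l)
  show ?case
  proof (cases "x = l \<or> y = l")
    case True
    then show ?thesis using less.prems by auto
  next
    case False
    then have "0 < l" "l < n" "child\<^sup>*\<^sup>* x (par l)" "child\<^sup>*\<^sup>* y (par l)"
      using descendant_cases[OF less.prems(1)] descendant_cases[OF less.prems(2)] by auto
    then show ?thesis using less.IH[of "par l"] par_less by blast
  qed
qed

lemma exists_leaf_descendant:
  assumes "0 < b" "b < n"
  shows "\<exists>l\<in>leaves. child\<^sup>*\<^sup>* b l"
  using assms
proof (induction "n - b" arbitrary: b rule: less_induct)
  case less
  show ?case
  proof (cases "\<exists>c. child b c")
    case True
    then obtain c where c: "child b c" by blast
    then have "n - c < n - b" using par_less[of c] by (auto simp: child_def)
    then obtain l where "l \<in> leaves" "child\<^sup>*\<^sup>* c l"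
      using less.hyps[of c] c by (auto simp: child_def)
    then show ?thesis using c by (meson converse_rtranclp_into_rtranclp)
  next
    case False
    then show ?thesis using less.prems by (auto simp: leaves_def)
  qed
qed

lemma crossing_not_descendant:
  assumes "b \<in> crossing i" "b' \<in> crossing i" "child\<^sup>*\<^sup>* b b'"
  shows "b = b'"
proof (rule ccontr)
  assume "b \<noteq> b'"
  then have "child\<^sup>*\<^sup>* b (par b')" using descendant_cases[OF assms(3)] by auto
  then have "b \<le> par b'" by (rule descendant_le)
  then show False using assms(1,2) by (auto simp: crossing_def)
qed

text \<open>Send every crossing vertex to a leaf below it: two crossing vertices with a common
  leaf descendant would be comparable, which crossing_not_descendant rules out.\<close>
lemma card_crossing_le_card_leaves: "card (crossing i) \<le> card leaves"
proof -
  obtain f where f: "\<And>b. b \<in> crossing i \<Longrightarrow> f b \<in> leaves \<and> child\<^sup>*\<^sup>* b (f b)"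
    using exists_leaf_descendant by (metis (no_types, lifting) crossing_def mem_Collect_eq)
  have "inj_on f (crossing i)"
  proof (rule inj_onI)
    fix b b' assume b: "b \<in> crossing i" "b' \<in> crossing i" "f b = f b'"
    then have "child\<^sup>*\<^sup>* b b' \<or> child\<^sup>*\<^sup>* b' b"
      using f common_descendant_comparable by metis
    then show "b = b'" using crossing_not_descendant b by metis
  qed
  moreover have "f ` crossing i \<subseteq> leaves" using f by blast
  moreover have "finite leaves" by (simp add: leaves_def)
  ultimately show ?thesis by (rule card_inj_on_le)
qed

end

locale gs_ordered_graph =
  fixes V :: "'a set" and E :: "'a \<Rightarrow> 'a \<Rightarrow> bool" and vs :: "'a list"
  assumes graph: "graph V E" and gs: "gs_ordering V E vs"
begin

definition parent_index :: "nat \<Rightarrow> nat" where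
  "parent_index b = (LEAST j. j < length vs \<and> E (vs ! j) (vs ! b))"

lemma distinct_vs: "distinct vs" and set_vs: "set vs = V"
  using gs by (simp_all add: gs_ordering_def)

lemma vs_nonempty: "vs \<noteq> []"
  using graph set_vs by (auto simp: graph_def)

lemma nth_vs_eq_iff: "i < length vs \<Longrightarrow> j < length vs \<Longrightarrow> vs ! i = vs ! j \<longleftrightarrow> i = j"
  using distinct_vs by (simp add: nth_eq_iff_index_eq)

lemma nth_vs_eq_hd_iff: "i < length vs \<Longrightarrow> vs ! i = hd vs \<longleftrightarrow> i = 0"
  using vs_nonempty nth_vs_eq_iff[of i 0] by (simp add: hd_conv_nth)

lemma parent_index_le: "a < length vs \<Longrightarrow> E (vs ! a) (vs ! b) \<Longrightarrow> parent_index b \<le> a"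
  unfolding parent_index_def by (rule Least_le) simp

lemma parent_index_less:
  assumes "0 < c" "c < length vs"
  shows "parent_index c < c"
proof -
  obtain j where "j < c" "E (vs ! j) (vs ! c)"
    using gs assms by (auto simp: gs_ordering_def)
  then show ?thesis using parent_index_le[of j c] assms by simp
qed

sublocale index_tree "length vs" parent_index
  by unfold_locales (rule parent_index_less)

lemma ftree_parent_nth: "ftree_parent E vs (vs ! c) = vs ! parent_index c"
  by (simp add: ftree_parent_def parent_index_def)

lemma has_ftree_child_iff:
  assumes "l < length vs"
  shows "(\<exists>u\<in>set vs. u \<noteq> hd vs \<and> ftree_parent E vs u = vs ! l) \<longleftrightarrow> (\<exists>c. child l c)"
proof
  assume "\<exists>u\<in>set vs. u \<noteq> hd vs \<and> ftree_parent E vs u = vs ! l"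
  then obtain c where c: "0 < c" "c < length vs" "vs ! parent_index c = vs ! l"
    by (auto simp: in_set_conv_nth nth_vs_eq_hd_iff ftree_parent_nth)
  with assms have "parent_index c = l"
    using parent_index_less[of c] nth_vs_eq_iff by simp
  then show "\<exists>c. child l c" using c by (auto simp: child_def)
next
  assume "\<exists>c. child l c"
  then obtain c where "0 < c" "c < length vs" "parent_index c = l" by (auto simp: child_def)
  then show "\<exists>u\<in>set vs. u \<noteq> hd vs \<and> ftree_parent E vs u = vs ! l"
    by (intro bexI[of _ "vs ! c"]) (auto simp: nth_vs_eq_hd_iff ftree_parent_nth)
qed

lemma ftree_leaves_eq_image: "ftree_leaves E vs = (!) vs ` leaves"
proof (rule set_eqI)
  fix v
  show "v \<in> ftree_leaves E vs \<longleftrightarrow> v \<in> (!) vs ` leaves"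
  proof (cases "v \<in> set vs")
    case True
    then obtain l where l: "l < length vs" "v = vs ! l" by (auto simp: in_set_conv_nth)
    have "v \<in> ftree_leaves E vs \<longleftrightarrow> 0 < l \<and> \<not> (\<exists>c. child l c)"
      unfolding ftree_leaves_def using l has_ftree_child_iff[OF l(1)] nth_vs_eq_hd_iff[OF l(1)]
      by auto
    also have "\<dots> \<longleftrightarrow> v \<in> (!) vs ` leaves"
      using l by (auto simp: leaves_def nth_vs_eq_iff)
    finally show ?thesis .
  next
    case False
    then show ?thesis by (auto simp: ftree_leaves_def leaves_def)
  qed
qed

lemma card_ftree_leaves: "card (ftree_leaves E vs) = card leaves"
  unfolding ftree_leaves_eq_image
  by (rule card_image) (auto intro: inj_onI simp: leaves_def nth_vs_eq_iff)

definition bag :: "nat \<Rightarrow> 'a set" where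
  "bag i = insert (vs ! i) ((!) vs ` crossing i)"

lemma nth_in_bag_iff:
  "i < length vs \<Longrightarrow> b < length vs \<Longrightarrow> vs ! b \<in> bag i \<longleftrightarrow> b = i \<or> b \<in> crossing i"
  by (auto simp: bag_def crossing_def nth_vs_eq_iff)

lemma bag_subset: "i < length vs \<Longrightarrow> bag i \<subseteq> V"
  using set_vs by (auto simp: bag_def crossing_def)

lemma edge_in_bag:
  assumes "a < b" "b < length vs" "E (vs ! a) (vs ! b)"
  shows "vs ! a \<in> bag a \<and> vs ! b \<in> bag a"
  using assms parent_index_le[of a b] by (auto simp: nth_in_bag_iff crossing_def)

text \<open>The vertex with index b lies exactly in the bags parent_index b, ..., b.\<close>
lemma bag_contiguous:
  assumes "i \<le> j" "j \<le> l" "l < length vs" "b < length vs"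
    and "vs ! b \<in> bag i" "vs ! b \<in> bag l"
  shows "vs ! b \<in> bag j"
  using assms by (auto simp: nth_in_bag_iff crossing_def)

lemma path_decomposition_bags: "path_decomposition V E (map bag [0..<length vs])"
  unfolding path_decomposition_def
proof (intro conjI allI impI)
  have bags: "set (map bag [0..<length vs]) = bag ` {..<length vs}"
    by auto
  then show "\<forall>B\<in>set (map bag [0..<length vs]). B \<subseteq> V"
    using bag_subset by auto
  have "V \<subseteq> (\<Union>i<length vs. bag i)"
    using set_vs by (auto simp: in_set_conv_nth bag_def)
  moreover have "(\<Union>i<length vs. bag i) \<subseteq> V"
    using bag_subset by blast
  ultimately show "\<Union> (set (map bag [0..<length vs])) = V"
    unfolding bags by (rule antisym[rotated])
next
  fix x y assume "E x y"
  then have "x \<in> set vs" "y \<in> set vs"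
    using graph set_vs by (auto simp: graph_def)
  then obtain a b where ab: "a < length vs" "b < length vs" "x = vs ! a" "y = vs ! b"
    by (auto simp: in_set_conv_nth)
  have "\<exists>i<length vs. x \<in> bag i \<and> y \<in> bag i"
  proof (cases a b rule: linorder_cases)
    case less
    then show ?thesis using edge_in_bag \<open>E x y\<close> ab by blast
  next
    case equal
    then show ?thesis using ab by (auto simp: bag_def)
  next
    case greater
    have "E y x" using \<open>E x y\<close> graph by (simp add: graph_def)
    then show ?thesis using edge_in_bag greater ab by blast
  qed
  then show "\<exists>B\<in>set (map bag [0..<length vs]). x \<in> B \<and> y \<in> B" by auto
next
  fix v i j l
  assume "i \<le> j \<and> j \<le> l \<and> l < length (map bag [0..<length vs])
    \<and> v \<in> map bag [0..<length vs] ! i \<and> v \<in> map bag [0..<length vs] ! l"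
  moreover from this have "v \<in> set vs"
    using bag_subset[of i] set_vs by auto
  then obtain b where "b < length vs" "v = vs ! b"
    by (auto simp: in_set_conv_nth)
  ultimately show "v \<in> map bag [0..<length vs] ! j"
    using bag_contiguous[of i j l b] by auto
qed

lemma card_bag_le: "card (bag i) \<le> card (ftree_leaves E vs) + 1"
proof -
  have "card (bag i) \<le> card ((!) vs ` crossing i) + 1"
    unfolding bag_def by (simp add: card_insert_le_m1)
  also have "\<dots> \<le> card (crossing i) + 1"
    using card_image_le[of "crossing i"] by (simp add: crossing_def)
  also have "\<dots> \<le> card (ftree_leaves E vs) + 1"
    using card_crossing_le_card_leaves card_ftree_leaves by simp
  finally show ?thesis .
qed

theorem pathwidth_le_card_ftree_leaves: "pathwidth V E \<le> card (ftree_leaves E vs)"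
  unfolding pathwidth_def
  using path_decomposition_bags card_bag_le
  by (intro Least_le exI[of _ "map bag [0..<length vs]"]) auto

end

lemma path_decomposition_single_bag:
  "graph V E \<Longrightarrow> path_decomposition V E [V]"
  by (auto simp: path_decomposition_def graph_def)

lemma pathwidth_less_card:
  assumes "graph V E"
  shows "pathwidth V E < card V"
proof -
  have "0 < card V" using assms by (auto simp: graph_def card_gt_0_iff)
  then have "\<exists>Bs. path_decomposition V E Bs \<and> (\<forall>B\<in>set Bs. card B \<le> card V - 1 + 1)"
    using path_decomposition_single_bag[OF assms] by auto
  then have "pathwidth V E \<le> card V - 1"
    unfolding pathwidth_def by (rule Least_le)
  then show ?thesis using \<open>0 < card V\<close> by linarith
qed

lemma optimal_path_decomposition:
  assumes "graph V E"
  obtains Bs where "path_decomposition V E Bs" "\<forall>B\<in>set Bs. card B \<le> pathwidth V E + 1"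
proof -
  have "\<exists>Bs. path_decomposition V E Bs \<and> (\<forall>B\<in>set Bs. card B \<le> card V + 1)"
    using path_decomposition_single_bag[OF assms] by auto
  then have "\<exists>Bs. path_decomposition V E Bs \<and> (\<forall>B\<in>set Bs. card B \<le> pathwidth V E + 1)"
    unfolding pathwidth_def by (rule LeastI)
  then show ?thesis using that by blast
qed

text \<open>The Helly property of intervals: the bag in which the clique vertex appearing last
  makes its first appearance contains the whole clique.\<close>
lemma clique_in_bag:
  assumes pd: "path_decomposition V E Bs" and "finite K" "K \<noteq> {}"
    and clique: "\<And>x y. x \<in> K \<Longrightarrow> y \<in> K \<Longrightarrow> x \<noteq> y \<Longrightarrow> E x y"
    and "K \<subseteq> V"
  shows "\<exists>B\<in>set Bs. K \<subseteq> B"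
proof -
  have union: "\<Union> (set Bs) = V"
    and edge_bag: "\<And>x y. E x y \<Longrightarrow> \<exists>B\<in>set Bs. x \<in> B \<and> y \<in> B"
    and contiguous: "\<And>v i j l. i \<le> j \<Longrightarrow> j \<le> l \<Longrightarrow> l < length Bs
      \<Longrightarrow> v \<in> Bs ! i \<Longrightarrow> v \<in> Bs ! l \<Longrightarrow> v \<in> Bs ! j"
    using pd unfolding path_decomposition_def by blast+
  have cover: "\<exists>i<length Bs. v \<in> Bs ! i" if "v \<in> V" for v
    using that union by (metis UnionE in_set_conv_nth)
  have edge: "\<exists>i<length Bs. x \<in> Bs ! i \<and> y \<in> Bs ! i" if "E x y" for x y
    using edge_bag[OF that] by (metis in_set_conv_nth)
  define first where "first v = (LEAST i. i < length Bs \<and> v \<in> Bs ! i)" for v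
  have first: "first v < length Bs \<and> v \<in> Bs ! first v" if "v \<in> K" for v
  proof -
    have "\<exists>i. i < length Bs \<and> v \<in> Bs ! i" using cover that \<open>K \<subseteq> V\<close> by blast
    then show ?thesis unfolding first_def by (rule LeastI_ex)
  qed
  have first_le: "first v \<le> i" if "i < length Bs" "v \<in> Bs ! i" for v i
    unfolding first_def using that by (intro Least_le) simp
  define m where "m = Max (first ` K)"
  have "m \<in> first ` K" unfolding m_def using assms(2,3) by simp
  then obtain v0 where v0: "v0 \<in> K" "first v0 = m" by blast
  have "K \<subseteq> Bs ! m"
  proof
    fix v assume v: "v \<in> K"
    show "v \<in> Bs ! m"
    proof (cases "v = v0")
      case True
      then show ?thesis using first v0 by auto
    next
      case False
      then obtain t where t: "t < length Bs" "v \<in> Bs ! t" "v0 \<in> Bs ! t"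
        using edge clique v v0 by blast
      have "first v \<le> m" using v assms(2) by (simp add: m_def)
      moreover have "m \<le> t" using first_le[OF t(1,3)] v0 by simp
      ultimately show ?thesis
        using contiguous[of "first v" m t v] first[OF v] t by blast
    qed
  qed
  moreover have "m < length Bs" using first v0 by auto
  ultimately show ?thesis by auto
qed

lemma card_clique_le_pathwidth:
  assumes "graph V E" "K \<subseteq> V"
    and "\<And>x y. x \<in> K \<Longrightarrow> y \<in> K \<Longrightarrow> x \<noteq> y \<Longrightarrow> E x y"
  shows "card K \<le> pathwidth V E + 1"
proof (cases "K = {}")
  case False
  obtain Bs where Bs: "path_decomposition V E Bs" "\<forall>B\<in>set Bs. card B \<le> pathwidth V E + 1"
    using optimal_path_decomposition[OF assms(1)] .
  have "finite K" using assms(1,2) finite_subset by (auto simp: graph_def)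
  then obtain B where B: "B \<in> set Bs" "K \<subseteq> B"
    using clique_in_bag[OF Bs(1) _ False assms(3,2)] by blast
  moreover have "finite B"
    using Bs(1) B(1) assms(1) finite_subset unfolding path_decomposition_def graph_def by metis
  ultimately have "card K \<le> card B" by (simp add: card_mono)
  then show ?thesis using Bs(2) B(1) by fastforce
qed simp

definition complete_graph :: "'a set \<Rightarrow> 'a \<Rightarrow> 'a \<Rightarrow> bool" where
  "complete_graph V x y \<longleftrightarrow> x \<in> V \<and> y \<in> V \<and> x \<noteq> y"

lemma connected_complete_graph:
  assumes "finite V" "V \<noteq> {}"
  shows "connected_graph V (complete_graph V)"
proof -
  have "(complete_graph V)\<^sup>*\<^sup>* x y" if "x \<in> V" "y \<in> V" for x y
    using that by (cases "x = y") (auto simp: complete_graph_def)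
  then show ?thesis
    using assms by (auto simp: connected_graph_def graph_def complete_graph_def)
qed

lemma pathwidth_complete_graph:
  assumes "finite V" "V \<noteq> {}"
  shows "pathwidth V (complete_graph V) = card V - 1"
proof -
  have "graph V (complete_graph V)"
    using connected_complete_graph[OF assms] by (simp add: connected_graph_def)
  then have "card V \<le> pathwidth V (complete_graph V) + 1"
    by (rule card_clique_le_pathwidth) (auto simp: complete_graph_def)
  moreover have "pathwidth V (complete_graph V) < card V"
    using \<open>graph V (complete_graph V)\<close> by (rule pathwidth_less_card)
  ultimately show ?thesis by linarith
qed

lemma gs_ordering_complete_graph:
  assumes "distinct vs"
  shows "gs_ordering (set vs) (complete_graph (set vs)) vs"
  unfolding gs_ordering_def
proof (intro conjI assms refl allI impI)
  fix i assume i: "i < length vs" "0 < i"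
  then have "0 < length vs" by linarith
  then have "vs ! 0 \<in> set vs" "vs ! i \<in> set vs" "vs ! 0 \<noteq> vs ! i"
    using i nth_eq_iff_index_eq[OF assms, of 0 i] by auto
  then have "complete_graph (set vs) (vs ! 0) (vs ! i)"
    by (simp add: complete_graph_def)
  then show "\<exists>j<i. complete_graph (set vs) (vs ! j) (vs ! i)"
    using \<open>0 < i\<close> by blast
qed

text \<open>Every non-root vertex is adjacent to the root, so the F-tree is a star.\<close>
lemma ftree_leaves_complete_graph:
  assumes "vs \<noteq> []"
  shows "ftree_leaves (complete_graph (set vs)) vs = set vs - {hd vs}"
proof -
  have "ftree_parent (complete_graph (set vs)) vs u = hd vs" if "u \<in> set vs" "u \<noteq> hd vs" for u
  proof -
    have "(LEAST j. j < length vs \<and> complete_graph (set vs) (vs ! j) u) = 0"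
      using that assms by (intro Least_equality) (auto simp: complete_graph_def hd_conv_nth)
    then show ?thesis using assms by (simp add: ftree_parent_def hd_conv_nth)
  qed
  then show ?thesis by (auto simp: ftree_leaves_def)
qed

theorem lemma3p8:
  shows "(\<forall>(V :: 'a set) E vs (k::nat).
            connected_graph V E \<and> gs_ordering V E vs \<and> card (ftree_leaves E vs) \<le> k
            \<longrightarrow> pathwidth V E \<le> k)
       \<and> (\<forall>k::nat. k \<ge> 1 \<longrightarrow>
            (\<exists>(V :: nat set) E vs. connected_graph V E \<and> gs_ordering V E vs
               \<and> card (ftree_leaves E vs) = k \<and> pathwidth V E = k))"
proof (intro conjI allI impI)
  fix V :: "'a set" and E vs and k :: nat
  assume assms: "connected_graph V E \<and> gs_ordering V E vs \<and> card (ftree_leaves E vs) \<le> k"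
  then interpret gs_ordered_graph V E vs
    by unfold_locales (simp_all add: connected_graph_def)
  show "pathwidth V E \<le> k"
    using pathwidth_le_card_ftree_leaves assms by linarith
next
  fix k :: nat
  define vs where "vs = [0..<Suc k]"
  have vs: "distinct vs" "vs \<noteq> []" "card (set vs) = Suc k"
    by (simp_all add: vs_def)
  have "connected_graph (set vs) (complete_graph (set vs))"
    using vs by (intro connected_complete_graph) auto
  moreover have "gs_ordering (set vs) (complete_graph (set vs)) vs"
    using vs(1) by (rule gs_ordering_complete_graph)
  moreover have "card (ftree_leaves (complete_graph (set vs)) vs) = k"
    using vs(2,3) by (simp add: ftree_leaves_complete_graph card_Diff_singleton)
  moreover have "pathwidth (set vs) (complete_graph (set vs)) = k"
    using vs by (simp add: pathwidth_complete_graph)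
  ultimately show "\<exists>(V :: nat set) E vs. connected_graph V E \<and> gs_ordering V E vs
               \<and> card (ftree_leaves E vs) = k \<and> pathwidth V E = k"
    by blast
qed

end
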